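(* Let $X$ be a Priestley space and $\mathcal U\subseteq{\sf DM}(X)$. Then the join $\bigvee\mathcal U$ in ${\sf DM}(X)$ is distributive (i.e., $V\cap\bigvee\mathcal U=\bigvee\{V\cap U:U\in\mathcal U\}$ in ${\sf DM}(X)$ for every $V\in{\sf DM}(X)$) if and only if $\bigvee\mathcal U={\sf int_1\,cl}\bigcup\mathcal U$.
   Context: A Priestley space is a compact space $X$ with a partial order $\le$ such that whenever $x\not\le y$ there is a clopen upset containing $x$ but not $y$. ${\sf cl}$, ${\sf int}$ denote closure and interior in the topology of $X$; ${\sf int_1}$ is the interior in the topology of open upsets, ${\sf cl_2}$ the closure in the topology of open downsets; explicitly ${\sf cl_2}(S)={\uparrow}{\sf cl}(S)$ and ${\sf int_1}(S)=X\setminus{\downarrow}(X\setminus{\sf int}(S))$. A DM-set is an open upset $U$ with ${\sf int_1\,cl_2}(U)=U$; ${\sf DM}(X)$ is the complete lattice of DM-sets, with finite meets given by intersection and joins $\bigvee\mathcal U={\sf int_1\,cl_2}(\bigcup\mathcal U)$. *)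

theory Defs
  imports "HOL-Analysis.Analysis"
begin

definition partial_order_on_space :: "'a topology \<Rightarrow> ('a \<Rightarrow> 'a \<Rightarrow> bool) \<Rightarrow> bool" where
  "partial_order_on_space X le \<longleftrightarrow>
     (\<forall>x\<in>topspace X. le x x) \<and>
     (\<forall>x\<in>topspace X. \<forall>y\<in>topspace X. \<forall>z\<in>topspace X. le x y \<longrightarrow> le y z \<longrightarrow> le x z) \<and>
     (\<forall>x\<in>topspace X. \<forall>y\<in>topspace X. le x y \<longrightarrow> le y x \<longrightarrow> x = y)"

definition is_upset :: "'a topology \<Rightarrow> ('a \<Rightarrow> 'a \<Rightarrow> bool) \<Rightarrow> 'a set \<Rightarrow> bool" where
  "is_upset X le S \<longleftrightarrow> S \<subseteq> topspace X \<and>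
     (\<forall>x\<in>S. \<forall>y\<in>topspace X. le x y \<longrightarrow> y \<in> S)"

definition priestley_space :: "'a topology \<Rightarrow> ('a \<Rightarrow> 'a \<Rightarrow> bool) \<Rightarrow> bool" where
  "priestley_space X le \<longleftrightarrow> compact_space X \<and> partial_order_on_space X le \<and>
     (\<forall>x\<in>topspace X. \<forall>y\<in>topspace X. \<not> le x y \<longrightarrow>
        (\<exists>U. closedin X U \<and> openin X U \<and> is_upset X le U \<and> x \<in> U \<and> y \<notin> U))"

definition upclosure :: "'a topology \<Rightarrow> ('a \<Rightarrow> 'a \<Rightarrow> bool) \<Rightarrow> 'a set \<Rightarrow> 'a set" where
  "upclosure X le S = {y \<in> topspace X. \<exists>x\<in>S. le x y}"

definition downclosure :: "'a topology \<Rightarrow> ('a \<Rightarrow> 'a \<Rightarrow> bool) \<Rightarrow> 'a set \<Rightarrow> 'a set" where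
  "downclosure X le S = {y \<in> topspace X. \<exists>x\<in>S. le y x}"

text \<open>cl_2(S) = up(cl S): closure in the topology of open downsets.\<close>
definition cl2 :: "'a topology \<Rightarrow> ('a \<Rightarrow> 'a \<Rightarrow> bool) \<Rightarrow> 'a set \<Rightarrow> 'a set" where
  "cl2 X le S = upclosure X le (X closure_of S)"

text \<open>int_1(S) = X - down(X - int S): interior in the topology of open upsets.\<close>
definition int1 :: "'a topology \<Rightarrow> ('a \<Rightarrow> 'a \<Rightarrow> bool) \<Rightarrow> 'a set \<Rightarrow> 'a set" where
  "int1 X le S = topspace X - downclosure X le (topspace X - X interior_of S)"

definition DM_set :: "'a topology \<Rightarrow> ('a \<Rightarrow> 'a \<Rightarrow> bool) \<Rightarrow> 'a set \<Rightarrow> bool" where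
  "DM_set X le U \<longleftrightarrow> openin X U \<and> is_upset X le U \<and> int1 X le (cl2 X le U) = U"

definition DM_join :: "'a topology \<Rightarrow> ('a \<Rightarrow> 'a \<Rightarrow> bool) \<Rightarrow> 'a set set \<Rightarrow> 'a set" where
  "DM_join X le \<U> = int1 X le (cl2 X le (\<Union>\<U>))"

definition DM_join_distributive :: "'a topology \<Rightarrow> ('a \<Rightarrow> 'a \<Rightarrow> bool) \<Rightarrow> 'a set set \<Rightarrow> bool" where
  "DM_join_distributive X le \<U> \<longleftrightarrow>
     (\<forall>V. DM_set X le V \<longrightarrow> V \<inter> DM_join X le \<U> = DM_join X le ((\<lambda>U. V \<inter> U) ` \<U>))"

end

theory Submission
  imports Defs
begin

text \<open>The inclusion \<open>int\<^sub>1 cl \<Union>\<U> \<subseteq> \<Or>\<U>\<close> always holds, because \<open>cl \<subseteq> cl\<^sub>2\<close>.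
  If \<open>\<Or>\<U>\<close> is distributive, meeting it with a clopen upset \<open>A\<close> (a DM-set) shows that
  \<open>\<Or>\<U>\<close> misses every set \<open>A - B\<close>, with \<open>A, B\<close> clopen upsets, that misses \<open>\<Union>\<U>\<close>. In a
  Priestley space these differences form a basis, so \<open>\<Or>\<U> \<subseteq> cl \<Union>\<U>\<close>, and as an open
  upset \<open>\<Or>\<U>\<close> then lies in \<open>int\<^sub>1 cl \<Union>\<U>\<close>. Conversely, if \<open>\<Or>\<U> = int\<^sub>1 cl \<Union>\<U>\<close> and \<open>V\<close>
  is an open upset, then \<open>V \<inter> int\<^sub>1 cl \<Union>\<U>\<close> is an open upset contained in
  \<open>cl (V \<inter> \<Union>\<U>)\<close>, hence in \<open>\<Or>{V \<inter> U : U \<in> \<U>}\<close>. Both directions need \<open>int\<^sub>1 S\<close> to be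
  open, i.e. the downset of a closed set to be closed, which again follows from Priestley
  separation and compactness.\<close>

lemma partial_order_on_spaceD:
  assumes "partial_order_on_space X le"
  shows partial_order_on_space_refl: "x \<in> topspace X \<Longrightarrow> le x x"
    and partial_order_on_space_trans:
      "x \<in> topspace X \<Longrightarrow> y \<in> topspace X \<Longrightarrow> z \<in> topspace X \<Longrightarrow> le x y \<Longrightarrow> le y z \<Longrightarrow> le x z"
    and partial_order_on_space_antisym:
      "x \<in> topspace X \<Longrightarrow> y \<in> topspace X \<Longrightarrow> le x y \<Longrightarrow> le y x \<Longrightarrow> x = y"
  using assms unfolding partial_order_on_space_def by blast+

lemma priestley_space_partial_order:
  "priestley_space X le \<Longrightarrow> partial_order_on_space X le"
  by (simp add: priestley_space_def)

definition clopen_upset :: "'a topology \<Rightarrow> ('a \<Rightarrow> 'a \<Rightarrow> bool) \<Rightarrow> 'a set \<Rightarrow> bool" where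
  "clopen_upset X le U \<longleftrightarrow> openin X U \<and> closedin X U \<and> is_upset X le U"

lemma clopen_upset_empty: "clopen_upset X le {}"
  by (simp add: clopen_upset_def is_upset_def)

lemma clopen_upset_topspace: "clopen_upset X le (topspace X)"
  by (simp add: clopen_upset_def is_upset_def)

lemma clopen_upset_Int:
  "clopen_upset X le A \<Longrightarrow> clopen_upset X le B \<Longrightarrow> clopen_upset X le (A \<inter> B)"
  unfolding clopen_upset_def is_upset_def by auto

lemma clopen_upset_Un:
  "clopen_upset X le A \<Longrightarrow> clopen_upset X le B \<Longrightarrow> clopen_upset X le (A \<union> B)"
  unfolding clopen_upset_def is_upset_def by auto

lemma clopen_upset_INT:
  assumes "finite I" "\<And>i. i \<in> I \<Longrightarrow> clopen_upset X le (A i)"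
  shows "clopen_upset X le (topspace X \<inter> (\<Inter>i\<in>I. A i))"
  using assms
proof (induction I rule: finite_induct)
  case empty
  then show ?case by (simp add: clopen_upset_topspace)
next
  case (insert i I)
  then have "clopen_upset X le (A i \<inter> (topspace X \<inter> (\<Inter>i\<in>I. A i)))"
    by (simp add: clopen_upset_Int)
  then show ?case by (simp add: Int_left_commute)
qed

lemma clopen_upset_UN:
  assumes "finite I" "\<And>i. i \<in> I \<Longrightarrow> clopen_upset X le (B i)"
  shows "clopen_upset X le (\<Union>i\<in>I. B i)"
  using assms by (induction I rule: finite_induct) (simp_all add: clopen_upset_empty clopen_upset_Un)

lemma int1_mono: "A \<subseteq> B \<Longrightarrow> int1 X le A \<subseteq> int1 X le B"
  unfolding int1_def downclosure_def using interior_of_mono[of A B X] by blast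

lemma cl2_mono: "A \<subseteq> B \<Longrightarrow> cl2 X le A \<subseteq> cl2 X le B"
  unfolding cl2_def upclosure_def using closure_of_mono[of A B X] by blast

lemma int1_subset:
  assumes "partial_order_on_space X le"
  shows "int1 X le S \<subseteq> S"
  using partial_order_on_space_refl[OF assms] interior_of_subset[of X S]
  unfolding int1_def downclosure_def by blast

lemma is_upset_int1:
  assumes "partial_order_on_space X le"
  shows "is_upset X le (int1 X le S)"
  using partial_order_on_space_trans[OF assms]
  unfolding is_upset_def int1_def downclosure_def by blast

lemma int1_maximal:
  assumes "W \<subseteq> S" "openin X W" "is_upset X le W"
  shows "W \<subseteq> int1 X le S"
proof -
  have "W \<subseteq> X interior_of S" using assms by (simp add: interior_of_maximal)
  then show ?thesis using assms(3) unfolding int1_def downclosure_def is_upset_def by blast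
qed

lemma closure_of_subset_cl2:
  assumes "partial_order_on_space X le"
  shows "X closure_of S \<subseteq> cl2 X le S"
  using partial_order_on_space_refl[OF assms] closure_of_subset_topspace[of X S]
  unfolding cl2_def upclosure_def by blast

lemma int1_open_upset:
  assumes "partial_order_on_space X le" "openin X U" "is_upset X le U"
  shows "int1 X le U = U"
  using int1_subset[OF assms(1)] int1_maximal[OF order_refl assms(2,3)] by blast

lemma cl2_closed_upset:
  assumes "partial_order_on_space X le" "closedin X U" "is_upset X le U"
  shows "cl2 X le U = U"
proof -
  have "upclosure X le U = U"
    using partial_order_on_space_refl[OF assms(1)] assms(3)
    unfolding upclosure_def is_upset_def by blast
  then show ?thesis by (simp add: cl2_def closure_of_closedin assms(2))
qed

lemma int1_cl2_clopen_upset: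
  "partial_order_on_space X le \<Longrightarrow> clopen_upset X le U \<Longrightarrow> int1 X le (cl2 X le U) = U"
  by (simp add: clopen_upset_def cl2_closed_upset int1_open_upset)

lemma DM_set_clopen_upset:
  "partial_order_on_space X le \<Longrightarrow> clopen_upset X le U \<Longrightarrow> DM_set X le U"
  using int1_cl2_clopen_upset by (auto simp: DM_set_def clopen_upset_def)

lemma priestley_separation:
  assumes P: "priestley_space X le" and K: "closedin X K" and z: "z \<in> topspace X" "z \<notin> K"
  obtains A B where "clopen_upset X le A" "clopen_upset X le B" "z \<in> A" "z \<notin> B"
    "K \<inter> A \<subseteq> B" "(\<forall>w\<in>K. \<not> le z w) \<longrightarrow> B = {}"
proof -
  have po: "partial_order_on_space X le"
    and sep: "\<And>x y. x \<in> topspace X \<Longrightarrow> y \<in> topspace X \<Longrightarrow> \<not> le x y \<Longrightarrow>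
        \<exists>U. clopen_upset X le U \<and> x \<in> U \<and> y \<notin> U"
    using P unfolding priestley_space_def clopen_upset_def by blast+
  have "\<exists>A B. clopen_upset X le A \<and> clopen_upset X le B \<and> z \<in> A \<and> z \<notin> B \<and>
      w \<in> (topspace X - A) \<union> B \<and> (B \<noteq> {} \<longrightarrow> le z w)" if w: "w \<in> K" for w
  proof -
    have wt: "w \<in> topspace X" using w K closedin_subset by blast
    show ?thesis
    proof (cases "le z w")
      case False
      then obtain U where "clopen_upset X le U" "z \<in> U" "w \<notin> U" using sep z(1) wt by blast
      then show ?thesis using wt clopen_upset_empty[of X le] by blast
    next
      case True
      then have "\<not> le w z" using partial_order_on_space_antisym[OF po z(1) wt] w z(2) by blast
      then obtain U where "clopen_upset X le U" "w \<in> U" "z \<notin> U" using sep z(1) wt by blast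
      then show ?thesis using True z(1) clopen_upset_topspace[of X le] by blast
    qed
  qed
  then obtain a b where ab: "\<And>w. w \<in> K \<Longrightarrow> clopen_upset X le (a w) \<and> clopen_upset X le (b w) \<and>
      z \<in> a w \<and> z \<notin> b w \<and> w \<in> (topspace X - a w) \<union> b w \<and> (b w \<noteq> {} \<longrightarrow> le z w)"
    by metis
  define nbhd where "nbhd w = (topspace X - a w) \<union> b w" for w
  have "compactin X K" using P K closedin_compact_space unfolding priestley_space_def by blast
  moreover have "openin X T" if "T \<in> nbhd ` K" for T
    using that ab unfolding nbhd_def clopen_upset_def by blast
  moreover have "K \<subseteq> \<Union>(nbhd ` K)"
    using ab unfolding nbhd_def by blast
  ultimately have "\<exists>\<F>. finite \<F> \<and> \<F> \<subseteq> nbhd ` K \<and> K \<subseteq> \<Union>\<F>"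
    by (rule compactinD)
  then obtain W where W: "finite W" "W \<subseteq> K" "K \<subseteq> \<Union>(nbhd ` W)"
    by (metis finite_subset_image)
  show ?thesis
  proof
    show "clopen_upset X le (topspace X \<inter> (\<Inter>w\<in>W. a w))"
      using W(1,2) ab by (intro clopen_upset_INT) blast+
    show "clopen_upset X le (\<Union>w\<in>W. b w)"
      using W(1,2) ab by (intro clopen_upset_UN) blast+
    show "z \<in> topspace X \<inter> (\<Inter>w\<in>W. a w)" "z \<notin> (\<Union>w\<in>W. b w)"
      using W(2) ab z(1) by blast+
    show "K \<inter> (topspace X \<inter> (\<Inter>w\<in>W. a w)) \<subseteq> (\<Union>w\<in>W. b w)"
      using W(3) unfolding nbhd_def by blast
    show "(\<forall>w\<in>K. \<not> le z w) \<longrightarrow> (\<Union>w\<in>W. b w) = {}"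
      using W(2) ab by blast
  qed
qed

lemma closedin_downclosure:
  assumes P: "priestley_space X le" and K: "closedin X K"
  shows "closedin X (downclosure X le K)"
  unfolding closedin_def
proof (intro conjI)
  show "downclosure X le K \<subseteq> topspace X" by (auto simp: downclosure_def)
  have po: "partial_order_on_space X le" using P by (rule priestley_space_partial_order)
  show "openin X (topspace X - downclosure X le K)"
  proof (subst openin_subopen, intro ballI)
    fix z assume z: "z \<in> topspace X - downclosure X le K"
    then have zt: "z \<in> topspace X" and above: "\<forall>w\<in>K. \<not> le z w"
      unfolding downclosure_def by blast+
    have zK: "z \<notin> K" using z partial_order_on_space_refl[OF po] unfolding downclosure_def by blast
    obtain A B where A: "clopen_upset X le A" and "clopen_upset X le B" "z \<in> A" "z \<notin> B"
      and AB: "K \<inter> A \<subseteq> B" and B: "(\<forall>w\<in>K. \<not> le z w) \<longrightarrow> B = {}"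
      by (rule priestley_separation[OF P K zt zK])
    have "K \<inter> A = {}" using AB B above by blast
    then have "A \<subseteq> topspace X - downclosure X le K"
      using A closedin_subset[OF K] unfolding clopen_upset_def is_upset_def downclosure_def by blast
    then show "\<exists>T. openin X T \<and> z \<in> T \<and> T \<subseteq> topspace X - downclosure X le K"
      using A \<open>z \<in> A\<close> unfolding clopen_upset_def by blast
  qed
qed

lemma openin_int1:
  assumes "priestley_space X le"
  shows "openin X (int1 X le S)"
  unfolding int1_def
  by (intro openin_diff openin_topspace closedin_downclosure[OF assms] closedin_diff
      closedin_topspace openin_interior_of)

lemma int1_closure_subset_DM_join:
  assumes "partial_order_on_space X le"
  shows "int1 X le (X closure_of \<Union>\<U>) \<subseteq> DM_join X le \<U>"
  unfolding DM_join_def by (intro int1_mono closure_of_subset_cl2 assms)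

lemma DM_join_subset_closure_if_distributive:
  assumes P: "priestley_space X le" and D: "DM_join_distributive X le \<U>"
  shows "DM_join X le \<U> \<subseteq> X closure_of \<Union>\<U>"
proof
  fix z assume zJ: "z \<in> DM_join X le \<U>"
  have po: "partial_order_on_space X le" using P by (rule priestley_space_partial_order)
  show "z \<in> X closure_of \<Union>\<U>"
  proof (rule ccontr)
    assume zn: "z \<notin> X closure_of \<Union>\<U>"
    have zt: "z \<in> topspace X" using zJ by (simp add: DM_join_def int1_def)
    obtain A B where A: "clopen_upset X le A" and B: "clopen_upset X le B"
      and "z \<in> A" "z \<notin> B" and AB: "X closure_of \<Union>\<U> \<inter> A \<subseteq> B"
      and "(\<forall>w \<in> X closure_of \<Union>\<U>. \<not> le z w) \<longrightarrow> B = {}"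
      by (rule priestley_separation[OF P closedin_closure_of zt zn])
    have "A \<inter> \<Union>\<U> \<subseteq> B"
      using AB A closure_of_subset_Int[of X "\<Union>\<U>"] openin_subset[of X A]
      unfolding clopen_upset_def by blast
    then have "DM_join X le ((\<lambda>U. A \<inter> U) ` \<U>) \<subseteq> int1 X le (cl2 X le B)"
      unfolding DM_join_def by (intro int1_mono cl2_mono) blast
    also have "\<dots> = B" using int1_cl2_clopen_upset[OF po B] .
    finally have "A \<inter> DM_join X le \<U> \<subseteq> B"
      using D DM_set_clopen_upset[OF po A] unfolding DM_join_distributive_def by blast
    then show False using zJ \<open>z \<in> A\<close> \<open>z \<notin> B\<close> by blast
  qed
qed

lemma DM_join_eq_int1_closure_if_distributive:
  assumes P: "priestley_space X le" and D: "DM_join_distributive X le \<U>"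
  shows "DM_join X le \<U> = int1 X le (X closure_of \<Union>\<U>)"
proof
  have po: "partial_order_on_space X le" using P by (rule priestley_space_partial_order)
  show "DM_join X le \<U> \<subseteq> int1 X le (X closure_of \<Union>\<U>)"
    unfolding DM_join_def
    by (intro int1_maximal openin_int1 is_upset_int1 P po
        DM_join_subset_closure_if_distributive[OF P D, unfolded DM_join_def])
  show "int1 X le (X closure_of \<Union>\<U>) \<subseteq> DM_join X le \<U>"
    by (rule int1_closure_subset_DM_join[OF po])
qed

lemma distributive_if_DM_join_eq_int1_closure:
  assumes P: "priestley_space X le" and E: "DM_join X le \<U> = int1 X le (X closure_of \<Union>\<U>)"
  shows "DM_join_distributive X le \<U>"
  unfolding DM_join_distributive_def
proof (intro allI impI)
  fix V assume "DM_set X le V"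
  then have oV: "openin X V" and uV: "is_upset X le V" and fixV: "int1 X le (cl2 X le V) = V"
    by (auto simp: DM_set_def)
  have po: "partial_order_on_space X le" using P by (rule priestley_space_partial_order)
  have union: "\<Union>((\<lambda>U. V \<inter> U) ` \<U>) = V \<inter> \<Union>\<U>" by blast
  have "V \<inter> int1 X le (X closure_of \<Union>\<U>) \<subseteq> int1 X le (cl2 X le (V \<inter> \<Union>\<U>))"
  proof (rule int1_maximal)
    have "V \<inter> int1 X le (X closure_of \<Union>\<U>) \<subseteq> V \<inter> X closure_of \<Union>\<U>"
      using int1_subset[OF po] by blast
    also have "\<dots> \<subseteq> X closure_of (V \<inter> \<Union>\<U>)" by (rule openin_Int_closure_of_subset[OF oV])
    also have "\<dots> \<subseteq> cl2 X le (V \<inter> \<Union>\<U>)" by (rule closure_of_subset_cl2[OF po])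
    finally show "V \<inter> int1 X le (X closure_of \<Union>\<U>) \<subseteq> cl2 X le (V \<inter> \<Union>\<U>)" .
    show "openin X (V \<inter> int1 X le (X closure_of \<Union>\<U>))"
      using oV openin_int1[OF P] by blast
    show "is_upset X le (V \<inter> int1 X le (X closure_of \<Union>\<U>))"
      using uV is_upset_int1[OF po] by (auto simp: is_upset_def)
  qed
  moreover have "int1 X le (cl2 X le (V \<inter> \<Union>\<U>)) \<subseteq> V \<inter> DM_join X le \<U>"
    using int1_mono[OF cl2_mono, of "V \<inter> \<Union>\<U>" V X le X le]
      int1_mono[OF cl2_mono, of "V \<inter> \<Union>\<U>" "\<Union>\<U>" X le X le]
    unfolding fixV DM_join_def by blast
  moreover have "DM_join X le ((\<lambda>U. V \<inter> U) ` \<U>) = int1 X le (cl2 X le (V \<inter> \<Union>\<U>))"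
    by (simp only: DM_join_def union)
  ultimately show "V \<inter> DM_join X le \<U> = DM_join X le ((\<lambda>U. V \<inter> U) ` \<U>)"
    using E by blast
qed

theorem theorem5p5:
  fixes X :: "'a topology" and le :: "'a \<Rightarrow> 'a \<Rightarrow> bool" and \<U> :: "'a set set"
  assumes "priestley_space X le"
    and "\<forall>U\<in>\<U>. DM_set X le U"
  shows "DM_join_distributive X le \<U> \<longleftrightarrow>
           DM_join X le \<U> = int1 X le (X closure_of (\<Union>\<U>))"
  using DM_join_eq_int1_closure_if_distributive[OF assms(1)]
    distributive_if_DM_join_eq_int1_closure[OF assms(1)] by blast

end
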